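(* Let $S,T \in \mathbb S$ and assume $h_S \not\leq^* f_T$. Then $S$ is nowhere dense in $T$.
   Context: $\mathbb S$ is the set of perfect subtrees of ${}^{<\omega}2$, ordered by inclusion. A node $\sigma\in T$ is splitting if $\sigma^\frown0,\sigma^\frown1\in T$; the splitting predecessors of a node $s\in T$ are the splitting nodes of $T$ that are proper initial segments of $s$. For $T\in\mathbb S$ define $h_T(n)=\min\{k: \text{some node of } T \text{ of length } k \text{ has } n \text{ splitting predecessors}\}$ and $f_T(n)=\min\{k:\text{every node of } T\text{ of length } k \text{ has } 2n \text{ splitting predecessors}\}$. For $f,g\in{}^\omega\omega$, $g\le^* f$ means $g(n)\le f(n)$ for all but finitely many $n$. For $s\in T$, $T_s=\{t\in T: t\subseteq s\text{ or } s\subseteq t\}$. $S$ is somewhere dense in $T$ if there is $s\in T$ with $T_s\subseteq S$; otherwise $S$ is nowhere dense in $T$. *)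

theory Defs
  imports Main "HOL-Library.Sublist"
begin

text \<open>Finite binary sequences are bool lists; s is an initial segment of t iff prefix s t.\<close>

definition is_tree :: "bool list set \<Rightarrow> bool" where
  "is_tree T \<longleftrightarrow> T \<noteq> {} \<and> (\<forall>t\<in>T. \<forall>s. prefix s t \<longrightarrow> s \<in> T)"

definition splitting :: "bool list set \<Rightarrow> bool list \<Rightarrow> bool" where
  "splitting T \<sigma> \<longleftrightarrow> \<sigma> @ [False] \<in> T \<and> \<sigma> @ [True] \<in> T"

definition perfect_tree :: "bool list set \<Rightarrow> bool" where
  "perfect_tree T \<longleftrightarrow> is_tree T \<and> (\<forall>s\<in>T. \<exists>t\<in>T. prefix s t \<and> splitting T t)"

definition split_preds :: "bool list set \<Rightarrow> bool list \<Rightarrow> bool list set" where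
  "split_preds T s = {\<sigma>. splitting T \<sigma> \<and> strict_prefix \<sigma> s}"

definition h_fun :: "bool list set \<Rightarrow> nat \<Rightarrow> nat" where
  "h_fun T n = (LEAST k. \<exists>s\<in>T. length s = k \<and> card (split_preds T s) = n)"

definition f_fun :: "bool list set \<Rightarrow> nat \<Rightarrow> nat" where
  "f_fun T n = (LEAST k. \<forall>s\<in>T. length s = k \<longrightarrow> card (split_preds T s) \<ge> 2 * n)"

definition eventually_le :: "(nat \<Rightarrow> nat) \<Rightarrow> (nat \<Rightarrow> nat) \<Rightarrow> bool" where
  "eventually_le g f \<longleftrightarrow> (\<forall>\<^sub>F n in sequentially. g n \<le> f n)"

definition subtree_at :: "bool list set \<Rightarrow> bool list \<Rightarrow> bool list set" where
  "subtree_at T s = {t\<in>T. prefix t s \<or> prefix s t}"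

definition nowhere_dense_in :: "bool list set \<Rightarrow> bool list set \<Rightarrow> bool" where
  "nowhere_dense_in S T \<longleftrightarrow> \<not> (\<exists>s\<in>T. subtree_at T s \<subseteq> S)"

end

theory Submission
  imports Defs
begin

text \<open>If \<open>T\<^sub>s \<subseteq> S\<close>, then for every \<open>n \<ge> |s|\<close> take a node \<open>t \<supseteq> s\<close> of \<open>T\<close> of length \<open>f\<^sub>T(n)\<close>.
  It has at least \<open>2n\<close> splitting predecessors in \<open>T\<close>, at most \<open>|s|\<close> of them below \<open>s\<close>; the
  remaining ones lie in \<open>T\<^sub>s \<subseteq> S\<close> and hence split in \<open>S\<close> too. Since the number of
  \<open>S\<close>-splitting predecessors grows by at most one per level, some prefix of \<open>t\<close> has exactly
  \<open>n\<close> of them, so \<open>h\<^sub>S(n) \<le> f\<^sub>T(n)\<close> for all \<open>n \<ge> |s|\<close>. The only delicate point is that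
  \<open>f\<^sub>T(n)\<close> is well defined: a perfect tree has only finitely many nodes with at most \<open>j\<close>
  splitting predecessors.\<close>

lemma is_tree_prefix_closed: "is_tree T \<Longrightarrow> t \<in> T \<Longrightarrow> prefix s t \<Longrightarrow> s \<in> T"
  unfolding is_tree_def by blast

lemma is_tree_Nil: "is_tree T \<Longrightarrow> [] \<in> T"
  unfolding is_tree_def using Nil_prefix by blast

lemma perfect_tree_is_tree: "perfect_tree T \<Longrightarrow> is_tree T"
  unfolding perfect_tree_def by blast

lemma splitting_children: "splitting T \<sigma> \<Longrightarrow> \<sigma> @ [b] \<in> T"
  unfolding splitting_def by (cases b) auto

lemma strict_prefixes_eq: "{\<sigma>. strict_prefix \<sigma> u} = set (prefixes u) - {u}"
  by (auto simp: strict_prefix_def)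

lemma finite_strict_prefixes: "finite {\<sigma>. strict_prefix \<sigma> u}"
  by (simp add: strict_prefixes_eq)

lemma card_strict_prefixes: "card {\<sigma>. strict_prefix \<sigma> u} = length u"
  by (simp add: strict_prefixes_eq)

lemma finite_split_preds: "finite (split_preds T u)"
  unfolding split_preds_def by (rule finite_subset[OF _ finite_strict_prefixes]) auto

lemma card_split_preds_le_length: "card (split_preds T u) \<le> length u"
proof -
  have "card (split_preds T u) \<le> card {\<sigma>. strict_prefix \<sigma> u}"
    unfolding split_preds_def by (rule card_mono[OF finite_strict_prefixes]) auto
  then show ?thesis by (simp add: card_strict_prefixes)
qed

lemma prefix_take_of_strict_prefix_take_Suc:
  assumes "strict_prefix \<sigma> (take (Suc i) t)"
  shows "prefix \<sigma> (take i t)"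
proof (rule prefix_length_prefix)
  show "prefix \<sigma> t"
    using assms by (meson prefix_order.dual_order.strict_implies_order prefix_order.order_trans
        take_is_prefix)
  show "length \<sigma> \<le> length (take i t)"
    using prefix_length_less[OF assms] by simp
qed (rule take_is_prefix)

lemma card_split_preds_take_Suc:
  "card (split_preds T (take (Suc i) t)) \<le> Suc (card (split_preds T (take i t)))"
proof -
  have "split_preds T (take (Suc i) t) \<subseteq> insert (take i t) (split_preds T (take i t))"
    unfolding split_preds_def
    using prefix_take_of_strict_prefix_take_Suc by (fastforce simp: strict_prefix_def)
  then have "card (split_preds T (take (Suc i) t))
      \<le> card (insert (take i t) (split_preds T (take i t)))"
    by (simp add: card_mono finite_split_preds)
  also have "\<dots> \<le> Suc (card (split_preds T (take i t)))"
    by (simp add: card_insert_le_m1)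
  finally show ?thesis .
qed

lemma perfect_tree_extension:
  assumes "perfect_tree T" "s \<in> T"
  shows "\<exists>u\<in>T. prefix s u \<and> length u = length s + d"
proof (induction d)
  case 0
  then show ?case using assms(2) by auto
next
  case (Suc d)
  then obtain u where u: "u \<in> T" "prefix s u" "length u = length s + d" by blast
  then obtain t where t: "prefix u t" "splitting T t"
    using assms(1) unfolding perfect_tree_def by blast
  define v where "v = take (Suc (length u)) (t @ [False])"
  have "v \<in> T"
    unfolding v_def using perfect_tree_is_tree[OF assms(1)] splitting_children[OF t(2)]
    by (rule is_tree_prefix_closed) (rule take_is_prefix)
  moreover have "prefix u v"
    unfolding v_def
  proof (rule prefix_length_prefix[OF _ take_is_prefix])
    show "prefix u (t @ [False])"
      using t(1) by (rule prefix_prefix)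
    show "length u \<le> length (take (Suc (length u)) (t @ [False]))"
      using prefix_length_le[OF t(1)] by simp
  qed
  moreover have "length v = Suc (length u)"
    unfolding v_def using prefix_length_le[OF t(1)] by simp
  ultimately show ?case using u(2,3) prefix_order.order_trans by auto
qed

subsection \<open>Few splitting predecessors means finitely many nodes\<close>

lemma first_splitting_extension:
  assumes "perfect_tree T" "t \<in> T"
  obtains u0 where "u0 \<in> T" "prefix t u0" "splitting T u0"
    "\<And>\<sigma>. prefix t \<sigma> \<Longrightarrow> strict_prefix \<sigma> u0 \<Longrightarrow> \<not> splitting T \<sigma>"
proof -
  obtain u1 where "u1 \<in> T" "prefix t u1" "splitting T u1"
    using assms unfolding perfect_tree_def by blast
  then obtain u0 where u0: "u0 \<in> T" "prefix t u0" "splitting T u0"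
    and least: "\<And>u. u \<in> T \<and> prefix t u \<and> splitting T u \<Longrightarrow> length u0 \<le> length u"
    using ex_has_least_nat[of "\<lambda>u. u \<in> T \<and> prefix t u \<and> splitting T u" u1 length] by blast
  have "\<not> splitting T \<sigma>" if "prefix t \<sigma>" "strict_prefix \<sigma> u0" for \<sigma>
  proof
    assume "splitting T \<sigma>"
    moreover have "\<sigma> \<in> T"
      using is_tree_prefix_closed[OF perfect_tree_is_tree[OF assms(1)] u0(1)] that(2)
      by (simp add: strict_prefix_def)
    ultimately have "length u0 \<le> length \<sigma>" using least that(1) by blast
    then show False using prefix_length_less[OF that(2)] by simp
  qed
  then show thesis using that u0 by blast
qed

lemma prefix_snoc_cases: "prefix u0 u \<Longrightarrow> u = u0 \<or> (\<exists>b. prefix (u0 @ [b]) u)"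
  by (metis prefix_Cons prefix_code(1) prefix_order.order_iff_strict same_prefix_prefix
      strict_prefixE')

lemma common_prefix_of_diverging:
  "prefix t (as @ b # bs) \<Longrightarrow> prefix t (as @ c # cs) \<Longrightarrow> b \<noteq> c \<Longrightarrow> prefix t as"
  by (metis Cons_prefix_Cons[of _ _ b bs] Cons_prefix_Cons[of _ _ c cs]
      append.right_neutral[of as] list.exhaust prefix_append prefix_append[of t as "c # cs"]
      prefix_def[of as "as @ []"] same_append_eq[of as])

text \<open>Above \<open>t\<close>, the tree is a single path up to the first splitting node \<open>u0\<close>.\<close>

lemma above_first_splitting_cases:
  assumes "is_tree T" "u \<in> T" "u0 \<in> T" "prefix t u" "prefix t u0"
    and first: "\<And>\<sigma>. prefix t \<sigma> \<Longrightarrow> strict_prefix \<sigma> u0 \<Longrightarrow> \<not> splitting T \<sigma>"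
  shows "prefix u u0 \<or> (\<exists>b. prefix (u0 @ [b]) u)"
proof (cases "u \<parallel> u0")
  case True
  then obtain as b bs c cs where d: "b \<noteq> c" "u = as @ b # bs" "u0 = as @ c # cs"
    using parallel_decomp[OF True] by blast
  have "as @ [b] \<in> T"
    by (rule is_tree_prefix_closed[OF assms(1,2)]) (simp add: d(2))
  moreover have "as @ [c] \<in> T"
    by (rule is_tree_prefix_closed[OF assms(1,3)]) (simp add: d(3))
  ultimately have "splitting T as"
    using d(1) unfolding splitting_def by (cases b; cases c) simp_all
  moreover have "prefix t as"
    using assms(4,5) unfolding d(2,3) by (rule common_prefix_of_diverging[OF _ _ d(1)])
  moreover have "strict_prefix as u0"
    using d(3) by (simp add: strict_prefix_def)
  ultimately show ?thesis using first by blast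
next
  case False
  then have "prefix u u0 \<or> prefix u0 u"
    unfolding parallel_def by blast
  then show ?thesis
    using prefix_snoc_cases by blast
qed

definition splits_above :: "bool list set \<Rightarrow> bool list \<Rightarrow> bool list \<Rightarrow> bool list set" where
  "splits_above T t u = {\<sigma> \<in> split_preds T u. prefix t \<sigma>}"

lemma finite_splits_above: "finite (splits_above T t u)"
  unfolding splits_above_def using finite_split_preds by simp

lemma splits_above_past_first_splitting:
  assumes "prefix t u0" "splitting T u0" "prefix (u0 @ [b]) u"
    and first: "\<And>\<sigma>. prefix t \<sigma> \<Longrightarrow> strict_prefix \<sigma> u0 \<Longrightarrow> \<not> splitting T \<sigma>"
  shows "splits_above T t u = insert u0 (splits_above T (u0 @ [b]) u)"
proof (intro equalityI subsetI)
  fix \<sigma> assume "\<sigma> \<in> splits_above T t u"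
  then have \<sigma>: "splitting T \<sigma>" "strict_prefix \<sigma> u" "prefix t \<sigma>"
    unfolding splits_above_def split_preds_def by auto
  have "prefix \<sigma> (u0 @ [b]) \<or> prefix (u0 @ [b]) \<sigma>"
    using prefix_same_cases[OF prefix_order.less_imp_le[OF \<sigma>(2)] assms(3)] .
  then consider "prefix \<sigma> u0" | "prefix (u0 @ [b]) \<sigma>"
    unfolding prefix_snoc by blast
  then show "\<sigma> \<in> insert u0 (splits_above T (u0 @ [b]) u)"
  proof cases
    case 1
    then have "\<sigma> = u0"
      using first[OF \<sigma>(3)] \<sigma>(1) by (auto simp: strict_prefix_def)
    then show ?thesis by simp
  next
    case 2
    then show ?thesis
      using \<sigma>(1,2) unfolding splits_above_def split_preds_def by simp
  qed
next
  fix \<sigma> assume "\<sigma> \<in> insert u0 (splits_above T (u0 @ [b]) u)"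
  then consider "\<sigma> = u0" | "splitting T \<sigma>" "strict_prefix \<sigma> u" "prefix (u0 @ [b]) \<sigma>"
    unfolding splits_above_def split_preds_def by blast
  then show "\<sigma> \<in> splits_above T t u"
  proof cases
    case 1
    have "strict_prefix u0 u"
      using append_prefixD[OF assms(3)] prefix_length_le[OF assms(3)]
      by (auto simp: strict_prefix_def)
    with 1 show ?thesis
      using assms(1,2) unfolding splits_above_def split_preds_def by simp
  next
    case 2
    have "prefix t \<sigma>"
      using prefix_order.trans[OF prefix_prefix[OF assms(1)] 2(3)] .
    then show ?thesis
      using 2(1,2) unfolding splits_above_def split_preds_def by simp
  qed
qed

lemma card_splits_above_past_first_splitting:
  assumes "prefix t u0" "splitting T u0" "prefix (u0 @ [b]) u"
    and first: "\<And>\<sigma>. prefix t \<sigma> \<Longrightarrow> strict_prefix \<sigma> u0 \<Longrightarrow> \<not> splitting T \<sigma>"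
  shows "card (splits_above T t u) = Suc (card (splits_above T (u0 @ [b]) u))"
proof -
  have "u0 \<notin> splits_above T (u0 @ [b]) u"
    unfolding splits_above_def using prefix_length_le[of "u0 @ [b]" u0] by auto
  then show ?thesis
    using splits_above_past_first_splitting[OF assms] by (simp add: finite_splits_above)
qed

lemma finite_nodes_few_splits_above:
  assumes "perfect_tree T" "t \<in> T"
  shows "finite {u \<in> T. prefix t u \<and> card (splits_above T t u) < j}"
  using assms(2)
proof (induction j arbitrary: t)
  case 0
  then show ?case by simp
next
  case (Suc j)
  let ?B = "\<lambda>t j. {u \<in> T. prefix t u \<and> card (splits_above T t u) < j}"
  obtain u0 where u0: "u0 \<in> T" "prefix t u0" "splitting T u0"
    and first: "\<And>\<sigma>. prefix t \<sigma> \<Longrightarrow> strict_prefix \<sigma> u0 \<Longrightarrow> \<not> splitting T \<sigma>"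
    using first_splitting_extension[OF assms(1) Suc.prems] by blast
  have "?B t (Suc j) \<subseteq> set (prefixes u0) \<union> (\<Union>b. ?B (u0 @ [b]) j)"
  proof
    fix u assume u: "u \<in> ?B t (Suc j)"
    from above_first_splitting_cases[OF perfect_tree_is_tree[OF assms(1)] _ u0(1) _ u0(2) first]
    consider "prefix u u0" | b where "prefix (u0 @ [b]) u"
      using u by blast
    then show "u \<in> set (prefixes u0) \<union> (\<Union>b. ?B (u0 @ [b]) j)"
    proof cases
      case (2 b)
      then have "u \<in> ?B (u0 @ [b]) j"
        using u card_splits_above_past_first_splitting[OF u0(2,3) 2 first] by simp
      then show ?thesis by blast
    qed simp
  qed
  moreover have "finite (\<Union>b. ?B (u0 @ [b]) j)"
    using Suc.IH[OF splitting_children[OF u0(3)]] by simp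
  ultimately show ?case
    by (meson finite_UnI finite_set finite_subset)
qed

lemma finite_nodes_few_splits:
  assumes "perfect_tree T"
  shows "finite {u \<in> T. card (split_preds T u) < j}"
  using finite_nodes_few_splits_above[OF assms is_tree_Nil[OF perfect_tree_is_tree[OF assms]]]
  by (simp add: splits_above_def)

lemma card_split_preds_at_f_fun:
  assumes "perfect_tree T" "u \<in> T" "length u = f_fun T n"
  shows "2 * n \<le> card (split_preds T u)"
proof -
  have "finite (length ` {u \<in> T. card (split_preds T u) < 2 * n})"
    using finite_nodes_few_splits[OF assms(1)] by simp
  then obtain k where "\<forall>u \<in> T. card (split_preds T u) < 2 * n \<longrightarrow> length u < k"
    unfolding finite_nat_set_iff_bounded by blast
  then have "\<forall>u \<in> T. length u = k \<longrightarrow> 2 * n \<le> card (split_preds T u)"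
    using not_le by blast
  then have "\<forall>u \<in> T. length u = f_fun T n \<longrightarrow> 2 * n \<le> card (split_preds T u)"
    unfolding f_fun_def by (rule LeastI)
  then show ?thesis using assms(2,3) by blast
qed

lemma f_fun_ge:
  assumes "perfect_tree T"
  shows "2 * n \<le> f_fun T n"
proof -
  obtain u where "u \<in> T" "length u = f_fun T n"
    using perfect_tree_extension[OF assms is_tree_Nil[OF perfect_tree_is_tree[OF assms]]] by fastforce
  then show ?thesis
    using card_split_preds_at_f_fun[OF assms] card_split_preds_le_length le_trans by metis
qed

lemma nat_discrete_intermediate_value:
  fixes g :: "nat \<Rightarrow> nat"
  assumes "g 0 = 0" "\<And>i. g (Suc i) \<le> Suc (g i)" "n \<le> g k"
  shows "\<exists>i\<le>k. g i = n"
  using assms(3)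
proof (induction k)
  case 0
  then show ?case using assms(1) by simp
next
  case (Suc k)
  show ?case
  proof (cases "n \<le> g k")
    case True
    then show ?thesis using Suc.IH le_SucI by blast
  next
    case False
    then have "g (Suc k) = n" using Suc.prems assms(2)[of k] by simp
    then show ?thesis by blast
  qed
qed

lemma h_fun_le_length:
  assumes "is_tree S" "u \<in> S" "n \<le> card (split_preds S u)"
  shows "h_fun S n \<le> length u"
proof -
  let ?g = "\<lambda>i. card (split_preds S (take i u))"
  have "?g 0 = 0"
    by (simp add: split_preds_def)
  moreover have "?g (length u) \<ge> n"
    using assms(3) by simp
  ultimately obtain i where i: "i \<le> length u" "?g i = n"
    using nat_discrete_intermediate_value[of ?g] card_split_preds_take_Suc by blast
  have "take i u \<in> S" "length (take i u) = i"
    using is_tree_prefix_closed[OF assms(1,2) take_is_prefix] i(1) by auto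
  then have "h_fun S n \<le> i"
    unfolding h_fun_def using i(2) by (intro Least_le) blast
  with i(1) show ?thesis by simp
qed

lemma card_split_preds_le_of_subtree_at:
  assumes "subtree_at T s \<subseteq> S" "prefix s t"
  shows "card (split_preds T t) \<le> length s + card (split_preds S t)"
proof -
  have "split_preds T t \<subseteq> {\<sigma>. strict_prefix \<sigma> s} \<union> split_preds S t"
  proof
    fix \<sigma> assume \<sigma>: "\<sigma> \<in> split_preds T t"
    then have "prefix \<sigma> t" "splitting T \<sigma>"
      unfolding split_preds_def by (auto simp: strict_prefix_def)
    then consider "strict_prefix \<sigma> s" | "prefix s \<sigma>"
      using assms(2) prefix_same_cases prefix_order.le_imp_less_or_eq by blast
    then show "\<sigma> \<in> {\<sigma>. strict_prefix \<sigma> s} \<union> split_preds S t"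
    proof cases
      case 2
      then have "\<sigma> @ [b] \<in> S" for b
        using assms(1) splitting_children[OF \<open>splitting T \<sigma>\<close>]
        unfolding subtree_at_def by (auto intro: prefix_order.order_trans)
      then show ?thesis
        using \<sigma> unfolding split_preds_def splitting_def by auto
    qed simp
  qed
  then have "card (split_preds T t) \<le> card ({\<sigma>. strict_prefix \<sigma> s} \<union> split_preds S t)"
    by (simp add: card_mono finite_strict_prefixes finite_split_preds)
  also have "\<dots> \<le> length s + card (split_preds S t)"
    using card_Un_le card_strict_prefixes by metis
  finally show ?thesis .
qed

theorem mainTheorem15:
  assumes "perfect_tree S" and "perfect_tree T"
    and "\<not> eventually_le (h_fun S) (f_fun T)"
  shows "nowhere_dense_in S T"
  unfolding nowhere_dense_in_def
proof
  assume "\<exists>s\<in>T. subtree_at T s \<subseteq> S"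
  then obtain s where s: "s \<in> T" "subtree_at T s \<subseteq> S" by blast
  have "h_fun S n \<le> f_fun T n" if n: "length s \<le> n" for n
  proof -
    have "length s \<le> f_fun T n"
      using f_fun_ge[OF assms(2), of n] n by simp
    then obtain t where t: "t \<in> T" "prefix s t" "length t = f_fun T n"
      using perfect_tree_extension[OF assms(2) s(1), of "f_fun T n - length s"] by auto
    have "2 * n \<le> length s + card (split_preds S t)"
      using card_split_preds_at_f_fun[OF assms(2) t(1,3)]
        card_split_preds_le_of_subtree_at[OF s(2) t(2)] by linarith
    moreover have "t \<in> S"
      using s(2) t(1,2) unfolding subtree_at_def by blast
    ultimately show ?thesis
      using h_fun_le_length[OF perfect_tree_is_tree[OF assms(1)], of t n] n t(3) by simp
  qed
  then have "eventually_le (h_fun S) (f_fun T)"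
    unfolding eventually_le_def eventually_sequentially by blast
  with assms(3) show False by contradiction
qed

end
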